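(* Let $\ell_1,\ell_2$ be two distinct intersecting lines in $\mathbb{R}^2$ given by $L_i=0$, where $L_i=A_ix+B_iy+C_i$ (real coefficients), $i=1,2$. For a real constant $C$, let $f(x,y)=L_1^2L_2+L_1+C$ and let $\Gamma$ be the real algebraic curve $f(x,y)=0$. Then $\Gamma$ is asymptotic to the lines $\ell_1$ and $\ell_2$. Moreover, if $C\neq0$, then $f$ is an irreducible bivariate polynomial. *)

theory Defs
  imports "HOL-Analysis.Analysis" "HOL-Computational_Algebra.Polynomial"
begin

text \<open>Bivariate real polynomials are represented as elements of R[x][y], i.e. the type
  real poly poly: a polynomial in y whose coefficients are polynomials in x.
  Irreducibility in R[x][y] coincides with irreducibility in R[x,y].\<close>

definition eval2 :: "real poly poly \<Rightarrow> real \<Rightarrow> real \<Rightarrow> real" where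
  "eval2 f x y = poly (map_poly (\<lambda>p. poly p x) f) y"

text \<open>The linear polynomial a x + b y + c.\<close>
definition linpoly :: "real \<Rightarrow> real \<Rightarrow> real \<Rightarrow> real poly poly" where
  "linpoly a b c = [:[:c, a:], [:b:]:]"

definition zero_set :: "real poly poly \<Rightarrow> (real \<times> real) set" where
  "zero_set f = {(x, y). eval2 f x y = 0}"

definition line :: "real \<Rightarrow> real \<Rightarrow> real \<Rightarrow> (real \<times> real) set" where
  "line a b c = {(x, y). a * x + b * y + c = 0}"

definition asymptotic_to :: "(real \<times> real) set \<Rightarrow> (real \<times> real) set \<Rightarrow> bool" where
  "asymptotic_to \<Gamma> L \<longleftrightarrow>
     (\<exists>\<gamma> :: real \<Rightarrow> real \<times> real.
        continuous_on {0..} \<gamma> \<and> (\<forall>t\<ge>0. \<gamma> t \<in> \<Gamma>) \<and>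
        filterlim (\<lambda>t. norm (\<gamma> t)) at_top at_top \<and>
        ((\<lambda>t. infdist (\<gamma> t) L) \<longlongrightarrow> 0) at_top)"

end

theory Submission
  imports
    Defs
    "HOL-Computational_Algebra.Field_as_Ring"
    "HOL-Computational_Algebra.Polynomial_Factorial"
    "HOL-Real_Asymp.Real_Asymp"
begin

(* Two distinct intersecting lines have linearly independent normals, so u = L1(x,y), v = L2(x,y)
   are affine coordinates on the plane, and in them f becomes u^2 v + u + C. Its zero set contains
   the branch u = e/s, v = -e s - C s^2 with e = +-1 of the sign of C, on which u -> 0 and |v| -> oo,
   and the branch u = s, v = -(s + C)/s^2, on which v -> 0 and |u| -> oo (s -> oo). The distance to
   a line is at most a constant times the value of its form, so these branches are asymptotic to
   l1 and l2. Viewed in R[u][v], u^2 v + (u + C) is linear in v with coprime coefficients when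
   C /= 0, hence irreducible, and an invertible affine substitution preserves irreducibility. *)

lemma eval2_altdef: "eval2 f x y = poly (poly f [:y:]) x"
  unfolding eval2_def by (induction f) (simp_all add: map_poly_pCons)

lemma eval2_0 [simp]: "eval2 0 x y = 0"
  and eval2_add [simp]: "eval2 (p + q) x y = eval2 p x y + eval2 q x y"
  and eval2_mult [simp]: "eval2 (p * q) x y = eval2 p x y * eval2 q x y"
  and eval2_power [simp]: "eval2 (p ^ n) x y = eval2 p x y ^ n"
  and eval2_pCons [simp]: "eval2 (pCons a p) x y = poly a x + y * eval2 p x y"
  and eval2_const [simp]: "eval2 [:[:r:]:] x y = r"
  and eval2_linpoly [simp]: "eval2 (linpoly A B C) x y = A * x + B * y + C"
  by (simp_all add: eval2_altdef poly_power linpoly_def algebra_simps)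

lemma eval2_eqI:
  assumes "\<And>x y. eval2 p x y = eval2 q x y"
  shows "p = q"
proof (rule poly_eqI)
  fix i
  have "map_poly (\<lambda>c. poly c x) p = map_poly (\<lambda>c. poly c x) q" for x
    using assms by (simp add: eval2_def poly_eq_poly_eq_iff[symmetric] fun_eq_iff)
  then have "poly (coeff p i) x = poly (coeff q i) x" for x
    by (metis coeff_map_poly poly_0)
  then show "coeff p i = coeff q i"
    by (simp add: poly_eq_poly_eq_iff[symmetric] fun_eq_iff)
qed

lemma is_unit_bivariate_iff: "is_unit (p :: real poly poly) \<longleftrightarrow> (\<exists>r. r \<noteq> 0 \<and> p = [:[:r:]:])"
  by (auto simp: is_unit_poly_iff is_unit_const_poly_iff dvd_field_iff)

section \<open>Substitution\<close>

definition subst2 :: "real poly poly \<Rightarrow> real poly poly \<Rightarrow> real poly poly \<Rightarrow> real poly poly" where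
  "subst2 p P Q = poly (map_poly (\<lambda>c. poly (map_poly (\<lambda>a. [:[:a:]:]) c) P) p) Q"

lemma eval2_poly_map_const: "eval2 (poly (map_poly (\<lambda>a. [:[:a:]:]) c) P) x y = poly c (eval2 P x y)"
  by (induction c) (simp_all add: map_poly_pCons)

lemma eval2_subst2 [simp]: "eval2 (subst2 p P Q) x y = eval2 p (eval2 P x y) (eval2 Q x y)"
  unfolding subst2_def
  by (induction p) (simp_all add: map_poly_pCons eval2_poly_map_const)

lemma subst2_mult: "subst2 (p * q) P Q = subst2 p P Q * subst2 q P Q"
  by (rule eval2_eqI) simp

lemma subst2_const [simp]: "subst2 [:[:r:]:] P Q = [:[:r:]:]"
  by (rule eval2_eqI) simp

lemma is_unit_subst2: "is_unit p \<Longrightarrow> is_unit (subst2 p P Q)"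
  by (auto simp: is_unit_bivariate_iff)

lemma irreducible_of_irreducible_subst2:
  assumes irr: "irreducible (subst2 f P Q)"
    and inv: "\<And>x y. eval2 P (eval2 P' x y) (eval2 Q' x y) = x"
      "\<And>x y. eval2 Q (eval2 P' x y) (eval2 Q' x y) = y"
  shows "irreducible f"
proof (rule irreducibleI)
  have subst2_inverse: "subst2 (subst2 p P Q) P' Q' = p" for p
    by (rule eval2_eqI) (simp add: inv)
  show "f \<noteq> 0"
    using irr by (auto simp: subst2_def)
  show "\<not> is_unit f"
    using irr is_unit_subst2 irreducible_not_unit by blast
  fix a b
  assume "f = a * b"
  then have "is_unit (subst2 a P Q) \<or> is_unit (subst2 b P Q)"
    using irr by (simp add: subst2_mult irreducibleD)
  then show "is_unit a \<or> is_unit b"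
    by (metis is_unit_subst2 subst2_inverse)
qed

section \<open>The model curve\<close>

definition model_cubic :: "real \<Rightarrow> real poly poly" where
  "model_cubic C = [:[:C, 1:], [:0, 0, 1:]:]"

lemma eval2_model_cubic [simp]: "eval2 (model_cubic C) u v = u\<^sup>2 * v + u + C"
  by (simp add: model_cubic_def power2_eq_square algebra_simps)

lemma coprime_linear_square:
  fixes C :: real
  assumes "C \<noteq> 0"
  shows "coprime [:C, 1:] [:0, 0, 1:]"
proof (rule coprimeI)
  fix c
  assume "c dvd [:C, 1:]" "c dvd [:0, 0, 1:]"
  then have "c dvd [:1 / C, - 1 / C^2:] * [:C, 1:] + [:1 / C^2:] * [:0, 0, 1:]"
    by (intro dvd_add dvd_mult)
  also have "\<dots> = 1"
    using assms by (simp add: field_simps power2_eq_square one_pCons)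
  finally show "is_unit c" .
qed

lemma irreducible_model_cubic:
  assumes "C \<noteq> 0"
  shows "irreducible (model_cubic C)"
  unfolding model_cubic_def
  using assms by (intro irreducible_linear_poly coprime_linear_square) simp_all

section \<open>Lines\<close>

lemma linear_form_zero_if_parallel:
  fixes A1 B1 A2 B2 dx dy :: real
  assumes "A1 * B2 - A2 * B1 = 0" "(A1, B1) \<noteq> (0, 0)" "A1 * dx + B1 * dy = 0"
  shows "A2 * dx + B2 * dy = 0"
proof -
  have "A1 * (A2 * dx + B2 * dy) = dy * (A1 * B2 - A2 * B1) + A2 * (A1 * dx + B1 * dy)"
    and "B1 * (A2 * dx + B2 * dy) = B2 * (A1 * dx + B1 * dy) - dx * (A1 * B2 - A2 * B1)"
    by algebra+
  then show ?thesis
    using assms by auto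
qed

lemma line_eq_if_parallel:
  assumes "A1 * B2 - A2 * B1 = 0" "(A1, B1) \<noteq> (0, 0)" "(A2, B2) \<noteq> (0, 0)"
    and "(p, q) \<in> line A1 B1 C1" "(p, q) \<in> line A2 B2 C2"
  shows "line A1 B1 C1 = line A2 B2 C2"
proof (intro set_eqI)
  have shift: "(x, y) \<in> line A B C \<longleftrightarrow> A * (x - p) + B * (y - q) = 0"
    if "(p, q) \<in> line A B C" for A B C x y :: real
    using that by (simp add: line_def algebra_simps) arith
  have "A2 * B1 - A1 * B2 = 0"
    using assms(1) by simp
  then have "A1 * (x - p) + B1 * (y - q) = 0 \<longleftrightarrow> A2 * (x - p) + B2 * (y - q) = 0" for x y
    using assms(1-3) linear_form_zero_if_parallel by metis
  then show "z \<in> line A1 B1 C1 \<longleftrightarrow> z \<in> line A2 B2 C2" for z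
    using shift[OF assms(4)] shift[OF assms(5)] by (cases z) simp
qed

lemma infdist_line_le:
  assumes "(A, B) \<noteq> (0, 0)"
  shows "\<exists>K. \<forall>x y. infdist (x, y) (line A B C) \<le> K * \<bar>A * x + B * y + C\<bar>"
proof (cases "A = 0")
  case True
  with assms have "B \<noteq> 0" by simp
  have "infdist (x, y) (line A B C) \<le> 1 / \<bar>B\<bar> * \<bar>A * x + B * y + C\<bar>" for x y
  proof -
    let ?l = "A * x + B * y + C"
    have "(x, y - ?l / B) \<in> line A B C"
      using True \<open>B \<noteq> 0\<close> by (simp add: line_def right_diff_distrib)
    then have "infdist (x, y) (line A B C) \<le> dist (x, y) (x, y - ?l / B)"
      by (rule infdist_le)
    also have "\<dots> = 1 / \<bar>B\<bar> * \<bar>?l\<bar>"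
      by (simp add: dist_Pair_Pair dist_real_def abs_divide)
    finally show ?thesis .
  qed
  then show ?thesis by blast
next
  case False
  have "infdist (x, y) (line A B C) \<le> 1 / \<bar>A\<bar> * \<bar>A * x + B * y + C\<bar>" for x y
  proof -
    let ?l = "A * x + B * y + C"
    have "(x - ?l / A, y) \<in> line A B C"
      using False by (simp add: line_def right_diff_distrib)
    then have "infdist (x, y) (line A B C) \<le> dist (x, y) (x - ?l / A, y)"
      by (rule infdist_le)
    also have "\<dots> = 1 / \<bar>A\<bar> * \<bar>?l\<bar>"
      by (simp add: dist_Pair_Pair dist_real_def abs_divide)
    finally show ?thesis .
  qed
  then show ?thesis by blast
qed

lemma abs_linear_form_le_norm:
  fixes p :: "real \<times> real"
  shows "\<bar>A * fst p + B * snd p + C\<bar> \<le> (\<bar>A\<bar> + \<bar>B\<bar>) * norm p + \<bar>C\<bar>"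
proof -
  have "\<bar>A * fst p\<bar> \<le> \<bar>A\<bar> * norm p" "\<bar>B * snd p\<bar> \<le> \<bar>B\<bar> * norm p"
    using norm_fst_le[of "fst p" "snd p"] norm_snd_le[of "snd p" "fst p"]
    by (auto simp: abs_mult intro!: mult_left_mono)
  then show ?thesis
    by (simp add: distrib_right)
qed

lemma filterlim_norm_at_top_of_linear_form:
  fixes \<gamma> :: "'a \<Rightarrow> real \<times> real"
  assumes "filterlim (\<lambda>t. \<bar>A * fst (\<gamma> t) + B * snd (\<gamma> t) + C\<bar>) at_top F"
  shows "filterlim (\<lambda>t. norm (\<gamma> t)) at_top F"
proof -
  define K where "K = \<bar>A\<bar> + \<bar>B\<bar> + 1"
  have "K > 0"
    unfolding K_def by simp
  have bound: "inverse K * (- \<bar>C\<bar> + \<bar>A * fst p + B * snd p + C\<bar>) \<le> norm p" for p :: "real \<times> real"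
  proof -
    have "\<bar>A * fst p + B * snd p + C\<bar> - \<bar>C\<bar> \<le> K * norm p"
      using abs_linear_form_le_norm[of A p B C] norm_ge_zero[of p]
      unfolding K_def distrib_right mult_1_left by linarith
    then show ?thesis
      using \<open>K > 0\<close> by (simp add: field_simps)
  qed
  have "filterlim (\<lambda>t. inverse K * (- \<bar>C\<bar> + \<bar>A * fst (\<gamma> t) + B * snd (\<gamma> t) + C\<bar>)) at_top F"
    using \<open>K > 0\<close>
    by (intro filterlim_tendsto_pos_mult_at_top[OF tendsto_const]
        filterlim_tendsto_add_at_top[OF tendsto_const assms]) simp
  then show ?thesis
    by (rule filterlim_at_top_mono) (intro always_eventually allI bound)
qed

lemma asymptotic_to_lineI:
  fixes \<gamma> :: "real \<Rightarrow> real \<times> real"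
  assumes "continuous_on {0..} \<gamma>" "\<forall>t\<ge>0. \<gamma> t \<in> \<Gamma>" "(A, B) \<noteq> (0, 0)"
    and "((\<lambda>t. A * fst (\<gamma> t) + B * snd (\<gamma> t) + C) \<longlongrightarrow> 0) at_top"
    and "filterlim (\<lambda>t. \<bar>A' * fst (\<gamma> t) + B' * snd (\<gamma> t) + C'\<bar>) at_top at_top"
  shows "asymptotic_to \<Gamma> (line A B C)"
proof -
  obtain K where K: "\<And>x y. infdist (x, y) (line A B C) \<le> K * \<bar>A * x + B * y + C\<bar>"
    using infdist_line_le[OF assms(3)] by blast
  have infdist_le: "infdist (\<gamma> t) (line A B C) \<le> K * \<bar>A * fst (\<gamma> t) + B * snd (\<gamma> t) + C\<bar>" for t
    using K[of "fst (\<gamma> t)" "snd (\<gamma> t)"] by simp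
  have bound_lim: "((\<lambda>t. K * \<bar>A * fst (\<gamma> t) + B * snd (\<gamma> t) + C\<bar>) \<longlongrightarrow> 0) at_top"
    by (intro tendsto_mult_right_zero tendsto_rabs_zero assms(4))
  have "((\<lambda>t. infdist (\<gamma> t) (line A B C)) \<longlongrightarrow> 0) at_top"
    by (rule tendsto_sandwich[OF _ _ tendsto_const bound_lim])
      (simp_all add: infdist_nonneg infdist_le)
  moreover have "filterlim (\<lambda>t. norm (\<gamma> t)) at_top at_top"
    by (rule filterlim_norm_at_top_of_linear_form[OF assms(5)])
  ultimately show ?thesis
    unfolding asymptotic_to_def using assms(1,2) by blast
qed

section \<open>Coordinates adapted to two crossing lines\<close>

locale crossing_lines =
  fixes A1 B1 C1 A2 B2 C2 :: real
  assumes det_nonzero: "A1 * B2 - A2 * B1 \<noteq> 0"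
begin

abbreviation \<delta> :: real where "\<delta> \<equiv> A1 * B2 - A2 * B1"
abbreviation L1 :: "real poly poly" where "L1 \<equiv> linpoly A1 B1 C1"
abbreviation L2 :: "real poly poly" where "L2 \<equiv> linpoly A2 B2 C2"

definition from_coords :: "real \<Rightarrow> real \<Rightarrow> real \<times> real" where
  "from_coords u v = ((B2 * (u - C1) - B1 * (v - C2)) / \<delta>, (A1 * (v - C2) - A2 * (u - C1)) / \<delta>)"

definition X :: "real poly poly" where
  "X = linpoly (B2 / \<delta>) (- B1 / \<delta>) ((B1 * C2 - B2 * C1) / \<delta>)"

definition Y :: "real poly poly" where
  "Y = linpoly (- A2 / \<delta>) (A1 / \<delta>) ((A2 * C1 - A1 * C2) / \<delta>)"

lemma eval2_X: "eval2 X u v = fst (from_coords u v)"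
  and eval2_Y: "eval2 Y u v = snd (from_coords u v)"
  by (simp_all add: X_def Y_def from_coords_def diff_divide_distrib add_divide_distrib algebra_simps)

lemma linear_forms_from_coords:
  "A1 * fst (from_coords u v) + B1 * snd (from_coords u v) + C1 = u"
  "A2 * fst (from_coords u v) + B2 * snd (from_coords u v) + C2 = v"
proof -
  have combine: "A * fst (from_coords u v) + B * snd (from_coords u v) =
      (A * (B2 * (u - C1) - B1 * (v - C2)) + B * (A1 * (v - C2) - A2 * (u - C1))) / \<delta>" for A B
    by (simp add: from_coords_def add_divide_distrib)
  have "A1 * (B2 * (u - C1) - B1 * (v - C2)) + B1 * (A1 * (v - C2) - A2 * (u - C1)) = \<delta> * (u - C1)"
    and "A2 * (B2 * (u - C1) - B1 * (v - C2)) + B2 * (A1 * (v - C2) - A2 * (u - C1)) = \<delta> * (v - C2)"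
    by algebra+
  then show "A1 * fst (from_coords u v) + B1 * snd (from_coords u v) + C1 = u"
    "A2 * fst (from_coords u v) + B2 * snd (from_coords u v) + C2 = v"
    using det_nonzero by (simp_all add: combine)
qed

lemma from_coords_linear_forms: "from_coords (A1 * x + B1 * y + C1) (A2 * x + B2 * y + C2) = (x, y)"
proof -
  have "B2 * (A1 * x + B1 * y) - B1 * (A2 * x + B2 * y) = \<delta> * x"
    and "A1 * (A2 * x + B2 * y) - A2 * (A1 * x + B1 * y) = \<delta> * y"
    by algebra+
  then show ?thesis
    using det_nonzero by (simp add: from_coords_def)
qed

lemma continuous_on_from_coords:
  "continuous_on S u \<Longrightarrow> continuous_on S v \<Longrightarrow> continuous_on S (\<lambda>t. from_coords (u t) (v t))"
  unfolding from_coords_def using det_nonzero by (intro continuous_intros) auto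

lemma from_coords_in_zero_set:
  "eval2 g u v = 0 \<Longrightarrow> from_coords u v \<in> zero_set (subst2 g L1 L2)"
  by (simp add: zero_set_def linear_forms_from_coords case_prod_beta)

lemma irreducible_subst2_linear_forms:
  assumes "irreducible g"
  shows "irreducible (subst2 g L1 L2)"
proof (rule irreducible_of_irreducible_subst2[where P' = L1 and Q' = L2])
  have "subst2 (subst2 g L1 L2) X Y = g"
    by (rule eval2_eqI) (simp add: eval2_X eval2_Y linear_forms_from_coords)
  then show "irreducible (subst2 (subst2 g L1 L2) X Y)"
    using assms by simp
qed (simp_all add: eval2_X eval2_Y from_coords_linear_forms)

lemma asymptotic_to_first_line:
  fixes u v :: "real \<Rightarrow> real"
  assumes "(A1, B1) \<noteq> (0, 0)" "continuous_on {0..} u" "continuous_on {0..} v"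
    and "\<forall>t\<ge>0. from_coords (u t) (v t) \<in> \<Gamma>"
    and "(u \<longlongrightarrow> 0) at_top" "filterlim (\<lambda>t. \<bar>v t\<bar>) at_top at_top"
  shows "asymptotic_to \<Gamma> (line A1 B1 C1)"
  using assms
  by (intro asymptotic_to_lineI[where \<gamma> = "\<lambda>t. from_coords (u t) (v t)" and A' = A2 and B' = B2 and C' = C2])
    (simp_all add: continuous_on_from_coords linear_forms_from_coords)

lemma asymptotic_to_second_line:
  fixes u v :: "real \<Rightarrow> real"
  assumes "(A2, B2) \<noteq> (0, 0)" "continuous_on {0..} u" "continuous_on {0..} v"
    and "\<forall>t\<ge>0. from_coords (u t) (v t) \<in> \<Gamma>"
    and "(v \<longlongrightarrow> 0) at_top" "filterlim (\<lambda>t. \<bar>u t\<bar>) at_top at_top"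
  shows "asymptotic_to \<Gamma> (line A2 B2 C2)"
  using assms
  by (intro asymptotic_to_lineI[where \<gamma> = "\<lambda>t. from_coords (u t) (v t)" and A' = A1 and B' = B1 and C' = C1])
    (simp_all add: continuous_on_from_coords linear_forms_from_coords)

lemma model_cubic_asymptotic_to_first_line:
  assumes "(A1, B1) \<noteq> (0, 0)"
  shows "asymptotic_to (zero_set (subst2 (model_cubic C) L1 L2)) (line A1 B1 C1)"
proof -
  \<comment> \<open>\<open>\<epsilon>\<close> has the sign of \<open>C\<close>, so the two terms of \<open>v\<close> below never cancel.\<close>
  define \<epsilon> :: real where "\<epsilon> = (if C < 0 then - 1 else 1)"
  have \<epsilon>: "\<epsilon> * \<epsilon> = 1" "\<epsilon> * C = \<bar>C\<bar>"
    by (simp_all add: \<epsilon>_def)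
  have v_large: "s \<le> \<bar>- \<epsilon> * s - C * s\<^sup>2\<bar>" if "s \<ge> 0" for s :: real
  proof -
    have "- \<epsilon> * s - C * s\<^sup>2 = - \<epsilon> * (s + \<bar>C\<bar> * s\<^sup>2)"
      by (simp add: algebra_simps \<epsilon>(1) flip: \<epsilon>(2))
    moreover have "\<bar>\<epsilon>\<bar> = 1" "0 \<le> \<bar>C\<bar> * s\<^sup>2"
      by (simp_all add: \<epsilon>_def)
    ultimately show ?thesis
      using that by (simp add: abs_mult)
  qed
  have on_curve: "(\<epsilon> / s)\<^sup>2 * (- \<epsilon> * s - C * s\<^sup>2) + \<epsilon> / s + C = 0" if "s \<noteq> 0" for s :: real
  proof -
    have "(\<epsilon> / s)\<^sup>2 = 1 / s\<^sup>2"
      by (simp add: power_divide power2_eq_square \<epsilon>(1))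
    then show ?thesis
      using that by (simp add: field_simps power2_eq_square)
  qed
  show ?thesis
  proof (rule asymptotic_to_first_line[OF assms,
        where u = "\<lambda>t. \<epsilon> / (t + 1)" and v = "\<lambda>t. - \<epsilon> * (t + 1) - C * (t + 1)\<^sup>2"])
    show "continuous_on {0..} (\<lambda>t::real. \<epsilon> / (t + 1))"
      by (intro continuous_intros) auto
    show "\<forall>t\<ge>0. from_coords (\<epsilon> / (t + 1)) (- \<epsilon> * (t + 1) - C * (t + 1)\<^sup>2)
        \<in> zero_set (subst2 (model_cubic C) L1 L2)"
      by (intro allI impI from_coords_in_zero_set, unfold eval2_model_cubic, rule on_curve) simp
    show "((\<lambda>t::real. \<epsilon> / (t + 1)) \<longlongrightarrow> 0) at_top"
      by real_asymp
    have "\<forall>\<^sub>F t in at_top. t \<le> \<bar>- \<epsilon> * (t + 1) - C * (t + 1)\<^sup>2\<bar>"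
      using eventually_ge_at_top[of "0::real"]
    proof eventually_elim
      case (elim t)
      then have "t + 1 \<le> \<bar>- \<epsilon> * (t + 1) - C * (t + 1)\<^sup>2\<bar>"
        by (intro v_large) simp
      then show ?case
        by linarith
    qed
    then show "filterlim (\<lambda>t. \<bar>- \<epsilon> * (t + 1) - C * (t + 1)\<^sup>2\<bar>) at_top at_top"
      by (rule filterlim_at_top_mono[OF filterlim_ident])
  qed (intro continuous_intros)
qed

lemma model_cubic_asymptotic_to_second_line:
  assumes "(A2, B2) \<noteq> (0, 0)"
  shows "asymptotic_to (zero_set (subst2 (model_cubic C) L1 L2)) (line A2 B2 C2)"
proof (rule asymptotic_to_second_line[OF assms,
      where u = "\<lambda>t. t + 1" and v = "\<lambda>t. - (t + 1 + C) / (t + 1)\<^sup>2"])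
  show "continuous_on {0..} (\<lambda>t::real. - (t + 1 + C) / (t + 1)\<^sup>2)"
    by (intro continuous_intros) auto
  show "\<forall>t\<ge>0. from_coords (t + 1) (- (t + 1 + C) / (t + 1)\<^sup>2)
      \<in> zero_set (subst2 (model_cubic C) L1 L2)"
    by (intro allI impI from_coords_in_zero_set) (simp add: field_simps)
  show "((\<lambda>t::real. - (t + 1 + C) / (t + 1)\<^sup>2) \<longlongrightarrow> 0) at_top"
    by real_asymp
  show "filterlim (\<lambda>t::real. \<bar>t + 1\<bar>) at_top at_top"
    by real_asymp
qed (intro continuous_intros)

end

theorem lemma5:
  fixes A1 B1 C1 A2 B2 C2 C :: real
  assumes "(A1, B1) \<noteq> (0, 0)" and "(A2, B2) \<noteq> (0, 0)"
    and "line A1 B1 C1 \<noteq> line A2 B2 C2"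
    and "line A1 B1 C1 \<inter> line A2 B2 C2 \<noteq> {}"
  defines "f \<equiv> (linpoly A1 B1 C1)\<^sup>2 * linpoly A2 B2 C2 + linpoly A1 B1 C1 + [:[:C:]:]"
  shows "asymptotic_to (zero_set f) (line A1 B1 C1) \<and>
         asymptotic_to (zero_set f) (line A2 B2 C2) \<and>
         (C \<noteq> 0 \<longrightarrow> irreducible f)"
proof -
  obtain p q where "(p, q) \<in> line A1 B1 C1" "(p, q) \<in> line A2 B2 C2"
    using assms(4) by auto
  then have "A1 * B2 - A2 * B1 \<noteq> 0"
    using line_eq_if_parallel assms(1-3) by blast
  then interpret crossing_lines A1 B1 C1 A2 B2 C2
    by unfold_locales
  have "f = subst2 (model_cubic C) L1 L2"
    unfolding f_def by (rule eval2_eqI) (simp add: power2_eq_square)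
  then show ?thesis
    using model_cubic_asymptotic_to_first_line[OF assms(1)]
      model_cubic_asymptotic_to_second_line[OF assms(2)]
      irreducible_subst2_linear_forms[OF irreducible_model_cubic]
    by simp
qed

end
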